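(* Let $K$ be a field and $n\ge 2$. If $\{\alpha_i\in\mathbb{M}(K^n) : 1\le i\le m\}$ is a collection of M-flags in general position with $m\ge 2n-1$, then no $\alpha\in\mathbb{M}(K^n)$ touches all of the M-flags $\alpha_1,\dots,\alpha_m$ simultaneously.
   Context: An M-flag in $\mathbb{P}(K^n)$ is a pair $\alpha=(\overline{H}^{+},\overline{v}^{-})$ where $\overline{H}^{+}\subset\mathbb{P}(K^n)$ is a projective hyperplane and $\overline{v}^{-}\in\overline{H}^{+}$ is a point; $\mathbb{M}(K^n)$ denotes the set of all M-flags. Two M-flags $\alpha_1=(\overline{H}^+_1,\overline{v}^-_1)$, $\alpha_2=(\overline{H}^+_2,\overline{v}^-_2)$ touch each other if $\overline{v}^-_1\in\overline{H}^+_2$ or $\overline{v}^-_2\in\overline{H}^+_1$. A collection $\{\alpha_i=(\overline{H}^+_i,\overline{v}^-_i) : i\in I\}$ is in general position if for every $J\subset I$ with $|J|=n$: (a) $\bigcap_{j\in J}\overline{H}^+_j=\emptyset$, and (b) the points $\overline{v}^-_j$, $j\in J$, span all of $\mathbb{P}(K^n)$ (i.e. the corresponding vectors span $K^n$). *)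

theory Defs
  imports Main
begin

text \<open>Vectors of K^n are functions 'n \<Rightarrow> 'a, with 'n a finite index type of
  cardinality n and 'a a field K. A projective point is represented by a nonzero
  vector v; a projective hyperplane by a nonzero linear functional f, given by its
  coefficient vector, with hyperplane {[x]. f . x = 0}. All notions below are
  invariant under rescaling of representatives.\<close>

type_synonym ('a, 'n) kvec = "'n \<Rightarrow> 'a"
type_synonym ('a, 'n) mflag = "('a, 'n) kvec \<times> ('a, 'n) kvec"

definition pair :: "('a::field, 'n::finite) kvec \<Rightarrow> ('a, 'n) kvec \<Rightarrow> 'a" where
  "pair f x = (\<Sum>k\<in>UNIV. f k * x k)"

text \<open>An M-flag (H^+, v^-): H^+ given by nonzero functional f, v^- by nonzero
  vector v, with v^- lying on H^+.\<close>
definition is_mflag :: "('a::field, 'n::finite) mflag \<Rightarrow> bool" where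
  "is_mflag \<alpha> \<longleftrightarrow> fst \<alpha> \<noteq> (\<lambda>_. 0) \<and> snd \<alpha> \<noteq> (\<lambda>_. 0) \<and> pair (fst \<alpha>) (snd \<alpha>) = 0"

definition touches :: "('a::field, 'n::finite) mflag \<Rightarrow> ('a, 'n) mflag \<Rightarrow> bool" where
  "touches \<alpha>1 \<alpha>2 \<longleftrightarrow> pair (fst \<alpha>2) (snd \<alpha>1) = 0 \<or> pair (fst \<alpha>1) (snd \<alpha>2) = 0"

text \<open>General position of a family indexed by I: for every J \<subseteq> I with |J| = n,
  (a) the projective hyperplanes have empty intersection, i.e. no nonzero vector
  lies in all kernels; (b) the vectors v_j span K^n.\<close>
definition general_position :: "'i set \<Rightarrow> ('i \<Rightarrow> ('a::field, 'n::finite) mflag) \<Rightarrow> bool" where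
  "general_position I \<alpha> \<longleftrightarrow>
     (\<forall>J. J \<subseteq> I \<and> finite J \<and> card J = card (UNIV :: 'n set) \<longrightarrow>
        \<not> (\<exists>x::('a,'n) kvec. x \<noteq> (\<lambda>_. 0) \<and> (\<forall>j\<in>J. pair (fst (\<alpha> j)) x = 0)) \<and>
        (\<forall>w::('a,'n) kvec. \<exists>c::'i \<Rightarrow> 'a. w = (\<lambda>k. \<Sum>j\<in>J. c j * snd (\<alpha> j) k)))"

end

theory Submission
  imports Defs
begin

text \<open>If \<beta> = (H, v) touches every \<alpha>_i, then each index i lies in
  A = {i. v \<in> H_i} or in B = {i. v_i \<in> H}. Since there are at least 2n - 1
  indices, one of A, B has n elements. If it is A, then v is a common point of n
  of the hyperplanes H_i, contradicting (a); if it is B, then the functional of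
  H vanishes on n points v_i, which span K^n by (b), so H would not be a
  hyperplane.\<close>

lemma pair_sum_right:
  fixes f :: "('a::field, 'n::finite) kvec"
  shows "pair f (\<lambda>k. \<Sum>j\<in>J. c j * v j k) = (\<Sum>j\<in>J. c j * pair f (v j))"
proof -
  have "pair f (\<lambda>k. \<Sum>j\<in>J. c j * v j k) = (\<Sum>k\<in>UNIV. \<Sum>j\<in>J. f k * (c j * v j k))"
    unfolding pair_def by (simp add: sum_distrib_left)
  also have "\<dots> = (\<Sum>j\<in>J. \<Sum>k\<in>UNIV. c j * (f k * v j k))"
    by (subst sum.swap) (simp add: algebra_simps)
  also have "\<dots> = (\<Sum>j\<in>J. c j * pair f (v j))"
    unfolding pair_def by (simp add: sum_distrib_left)
  finally show ?thesis .
qed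

lemma pair_unit_vector:
  fixes f :: "('a::field, 'n::finite) kvec"
  shows "pair f (\<lambda>i. if i = k then 1 else 0) = f k"
  unfolding pair_def by (simp add: if_distrib cong: if_cong)

lemma functional_eq_zero_if_pair_eq_zero:
  fixes f :: "('a::field, 'n::finite) kvec"
  assumes "\<And>w. pair f w = 0"
  shows "f = (\<lambda>_. 0)"
proof
  fix k
  show "f k = 0"
    using assms[of "\<lambda>i. if i = k then 1 else 0"] by (simp add: pair_unit_vector)
qed

lemma general_position_common_point_eq_zero:
  fixes \<alpha> :: "'i \<Rightarrow> ('a::field, 'n::finite) mflag"
  assumes "general_position I \<alpha>" and "J \<subseteq> I" and "finite J"
    and "card J \<ge> card (UNIV :: 'n set)"
    and "\<forall>j\<in>J. pair (fst (\<alpha> j)) x = 0"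
  shows "x = (\<lambda>_. 0)"
proof -
  obtain J' where "J' \<subseteq> J" "card J' = card (UNIV :: 'n set)"
    using assms(4) obtain_subset_with_card_n by metis
  moreover have "finite J'" and "J' \<subseteq> I"
    using \<open>J' \<subseteq> J\<close> assms(2,3) finite_subset by blast+
  ultimately show ?thesis
    using assms(1,5) unfolding general_position_def by blast
qed

lemma general_position_annihilator_eq_zero:
  fixes \<alpha> :: "'i \<Rightarrow> ('a::field, 'n::finite) mflag"
  assumes "general_position I \<alpha>" and "J \<subseteq> I" and "finite J"
    and "card J \<ge> card (UNIV :: 'n set)"
    and "\<forall>j\<in>J. pair f (snd (\<alpha> j)) = 0"
  shows "f = (\<lambda>_. 0)"
proof (rule functional_eq_zero_if_pair_eq_zero)
  fix w :: "('a, 'n) kvec"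
  obtain J' where J': "J' \<subseteq> J" "card J' = card (UNIV :: 'n set)"
    using assms(4) obtain_subset_with_card_n by metis
  moreover have "finite J'" and "J' \<subseteq> I"
    using J'(1) assms(2,3) finite_subset by blast+
  ultimately obtain c where "w = (\<lambda>k. \<Sum>j\<in>J'. c j * snd (\<alpha> j) k)"
    using assms(1) unfolding general_position_def by blast
  then have "pair f w = (\<Sum>j\<in>J'. c j * pair f (snd (\<alpha> j)))"
    by (simp add: pair_sum_right)
  also have "\<dots> = 0"
    using J'(1) assms(5) by (auto intro!: sum.neutral)
  finally show "pair f w = 0" .
qed

lemma card_le_if_card_Un_ge:
  assumes "finite A" and "finite B" and "card (A \<union> B) \<ge> 2 * n - 1"
  shows "n \<le> card A \<or> n \<le> card B"
  using assms card_Un_le[of A B] by linarith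

theorem mainTheorem7:
  fixes \<alpha> :: "nat \<Rightarrow> ('a::field, 'n::finite) mflag" and m :: nat
  assumes "card (UNIV :: 'n set) \<ge> 2"
    and "\<forall>i\<in>{1..m}. is_mflag (\<alpha> i)"
    and "general_position {1..m} \<alpha>"
    and "m \<ge> 2 * card (UNIV :: 'n set) - 1"
  shows "\<not> (\<exists>\<beta>::('a, 'n) mflag. is_mflag \<beta> \<and> (\<forall>i\<in>{1..m}. touches \<beta> (\<alpha> i)))"
proof
  assume "\<exists>\<beta>::('a, 'n) mflag. is_mflag \<beta> \<and> (\<forall>i\<in>{1..m}. touches \<beta> (\<alpha> i))"
  then obtain f v where "f \<noteq> (\<lambda>_. 0)" "v \<noteq> (\<lambda>_. 0)"
    and touch: "\<forall>i\<in>{1..m}. pair (fst (\<alpha> i)) v = 0 \<or> pair f (snd (\<alpha> i)) = 0"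
    unfolding is_mflag_def touches_def by fastforce
  define A where "A = {i\<in>{1..m}. pair (fst (\<alpha> i)) v = 0}"
  define B where "B = {i\<in>{1..m}. pair f (snd (\<alpha> i)) = 0}"
  have "A \<union> B = {1..m}"
    using touch unfolding A_def B_def by auto
  then have "card (UNIV :: 'n set) \<le> card A \<or> card (UNIV :: 'n set) \<le> card B"
    using assms(4) by (intro card_le_if_card_Un_ge) (auto simp: A_def B_def)
  moreover have "card (UNIV :: 'n set) \<le> card A \<Longrightarrow> v = (\<lambda>_. 0)"
    using assms(3) by (rule general_position_common_point_eq_zero) (auto simp: A_def)
  moreover have "card (UNIV :: 'n set) \<le> card B \<Longrightarrow> f = (\<lambda>_. 0)"
    using assms(3) by (rule general_position_annihilator_eq_zero) (auto simp: B_def)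
  ultimately show False
    using \<open>f \<noteq> (\<lambda>_. 0)\<close> \<open>v \<noteq> (\<lambda>_. 0)\<close> by blast
qed

end
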